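(* Let $(\mathcal{K},[\cdot,\cdot])$ be a Krein space with fundamental symmetry $J$, and let $\{k_n\}_{n\in\mathbb{N}}$ be a sequence in $\mathcal{K}$. Let $0<A\leq B<\infty$. The following statements are equivalent: (i) $\{k_n\}_{n\in\mathbb{N}}$ is a frame for the Krein space $\mathcal{K}$ with frame bounds $A\leq B$; (ii) $\{Jk_n\}_{n\in\mathbb{N}}$ is a frame for the Krein space $\mathcal{K}$ with frame bounds $A\leq B$; (iii) $\{k_n\}_{n\in\mathbb{N}}$ is a frame for the Hilbert space $(\mathcal{K},[\cdot,\cdot]_J)$ with frame bounds $A\leq B$; (iv) $\{Jk_n\}_{n\in\mathbb{N}}$ is a frame for the Hilbert space $(\mathcal{K},[\cdot,\cdot]_J)$ with frame bounds $A\leq B$.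
   Context: A Krein space $(\mathcal{K},[\cdot,\cdot])$ has a fundamental decomposition $\mathcal{K}=\mathcal{K}_+\oplus\mathcal{K}_-$ and fundamental symmetry $J(k^++k^-)=k^+-k^-$ ($k^\pm\in\mathcal{K}_\pm$), such that $[h,k]_J:=[h,Jk]$ is a positive definite inner product making $(\mathcal{K},[\cdot,\cdot]_J)$ a Hilbert space; $\|k\|_J:=\sqrt{[k,k]_J}$. A countable sequence $\{k_n\}$ in a Krein space $\mathcal{K}$ is a frame for the Krein space $\mathcal{K}$ with frame bounds $0<A\leq B<\infty$ if $A\|k\|_J^2\leq\sum_n|[k_n,k]|^2\leq B\|k\|_J^2$ for all $k\in\mathcal{K}$. A frame for a Hilbert space $(\mathcal{H},\langle\cdot,\cdot\rangle)$ with frame bounds $A\le B$ is a sequence $\{f_n\}$ with $A\|f\|^2\leq\sum_n|\langle f_n,f\rangle|^2\leq B\|f\|^2$ for all $f\in\mathcal{H}$. *)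

theory Defs
  imports "HOL-Analysis.Analysis"
begin

text \<open>The Krein space is the whole type 'a, a complex vector space with scalar
  multiplication sc (assumption vector_space sc).\<close>
definition hermitian_form :: "(complex \<Rightarrow> 'a \<Rightarrow> 'a) \<Rightarrow> ('a::ab_group_add \<Rightarrow> 'a \<Rightarrow> complex) \<Rightarrow> bool" where
  "hermitian_form sc ip \<longleftrightarrow>
     (\<forall>x y z. ip (x + y) z = ip x z + ip y z) \<and>
     (\<forall>(c::complex) x z. ip (sc c x) z = c * ip x z) \<and>
     (\<forall>x y. ip x y = cnj (ip y x))"

definition complex_subspace :: "(complex \<Rightarrow> 'a \<Rightarrow> 'a) \<Rightarrow> 'a::ab_group_add set \<Rightarrow> bool" where
  "complex_subspace sc S \<longleftrightarrow> 0 \<in> S \<and> (\<forall>x\<in>S. \<forall>y\<in>S. x + y \<in> S) \<and>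
     (\<forall>(c::complex). \<forall>x\<in>S. sc c x \<in> S)"

definition fundamental_decomposition ::
  "(complex \<Rightarrow> 'a \<Rightarrow> 'a) \<Rightarrow> ('a::ab_group_add \<Rightarrow> 'a \<Rightarrow> complex) \<Rightarrow> 'a set \<Rightarrow> 'a set \<Rightarrow> bool" where
  "fundamental_decomposition sc ip Kp Km \<longleftrightarrow>
     complex_subspace sc Kp \<and> complex_subspace sc Km \<and>
     Kp \<inter> Km = {0} \<and> (\<forall>x. \<exists>p\<in>Kp. \<exists>m\<in>Km. x = p + m) \<and>
     (\<forall>p\<in>Kp. \<forall>m\<in>Km. ip p m = 0) \<and>
     (\<forall>p\<in>Kp. p \<noteq> 0 \<longrightarrow> Re (ip p p) > 0) \<and>
     (\<forall>m\<in>Km. m \<noteq> 0 \<longrightarrow> Re (ip m m) < 0)"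

definition fund_sym :: "'a set \<Rightarrow> 'a set \<Rightarrow> 'a::ab_group_add \<Rightarrow> 'a" where
  "fund_sym Kp Km x = (THE y. \<exists>p\<in>Kp. \<exists>m\<in>Km. x = p + m \<and> y = p - m)"

definition J_inner :: "('a::ab_group_add \<Rightarrow> 'a \<Rightarrow> complex) \<Rightarrow> 'a set \<Rightarrow> 'a set \<Rightarrow> 'a \<Rightarrow> 'a \<Rightarrow> complex" where
  "J_inner ip Kp Km h k = ip h (fund_sym Kp Km k)"

definition J_norm :: "('a::ab_group_add \<Rightarrow> 'a \<Rightarrow> complex) \<Rightarrow> 'a set \<Rightarrow> 'a set \<Rightarrow> 'a \<Rightarrow> real" where
  "J_norm ip Kp Km k = sqrt (Re (J_inner ip Kp Km k k))"

definition krein_space :: "(complex \<Rightarrow> 'a \<Rightarrow> 'a) \<Rightarrow> ('a::ab_group_add \<Rightarrow> 'a \<Rightarrow> complex) \<Rightarrow> 'a set \<Rightarrow> 'a set \<Rightarrow> bool" where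
  "krein_space sc ip Kp Km \<longleftrightarrow>
     vector_space sc \<and> hermitian_form sc ip \<and> fundamental_decomposition sc ip Kp Km \<and>
     hermitian_form sc (J_inner ip Kp Km) \<and>
     (\<forall>x. x \<noteq> 0 \<longrightarrow> Re (J_inner ip Kp Km x x) > 0) \<and>
     (\<forall>X :: nat \<Rightarrow> 'a.
        (\<forall>e>0. \<exists>N. \<forall>m\<ge>N. \<forall>n\<ge>N. J_norm ip Kp Km (X m - X n) < e) \<longrightarrow>
        (\<exists>L. (\<lambda>n. J_norm ip Kp Km (X n - L)) \<longlonglongrightarrow> 0))"

definition krein_frame ::
  "('a::ab_group_add \<Rightarrow> 'a \<Rightarrow> complex) \<Rightarrow> 'a set \<Rightarrow> 'a set \<Rightarrow> (nat \<Rightarrow> 'a) \<Rightarrow> real \<Rightarrow> real \<Rightarrow> bool" where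
  "krein_frame ip Kp Km f A B \<longleftrightarrow> 0 < A \<and> A \<le> B \<and>
     (\<forall>k. summable (\<lambda>n. (cmod (ip (f n) k))\<^sup>2) \<and>
          A * (J_norm ip Kp Km k)\<^sup>2 \<le> (\<Sum>n. (cmod (ip (f n) k))\<^sup>2) \<and>
          (\<Sum>n. (cmod (ip (f n) k))\<^sup>2) \<le> B * (J_norm ip Kp Km k)\<^sup>2)"

definition hilbert_frame ::
  "('a \<Rightarrow> 'a \<Rightarrow> complex) \<Rightarrow> (nat \<Rightarrow> 'a) \<Rightarrow> real \<Rightarrow> real \<Rightarrow> bool" where
  "hilbert_frame ip f A B \<longleftrightarrow> 0 < A \<and> A \<le> B \<and>
     (\<forall>x. summable (\<lambda>n. (cmod (ip (f n) x))\<^sup>2) \<and>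
          A * (sqrt (Re (ip x x)))\<^sup>2 \<le> (\<Sum>n. (cmod (ip (f n) x))\<^sup>2) \<and>
          (\<Sum>n. (cmod (ip (f n) x))\<^sup>2) \<le> B * (sqrt (Re (ip x x)))\<^sup>2)"

end

theory Submission
  imports Defs
begin

text \<open>The fundamental symmetry J is an involution, self-adjoint for [.,.] and an isometry
  of the J-norm. Self-adjointness gives [J k_n, k] = [k_n, J k] = [k_n, k]_J, so the Hilbert
  frame inequalities for {k_n} (resp. {J k_n}) are literally the Krein frame inequalities for
  {J k_n} (resp. {k_n}); and since J is an isometric bijection, the substitution k := J k
  shows that {k_n} and {J k_n} are Krein frames with the same bounds.\<close>

lemma complex_subspace_uminus:
  assumes "vector_space sc" "complex_subspace sc S" "x \<in> S"
  shows "- x \<in> S"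
proof -
  interpret vector_space sc by fact
  have "sc (-1) x \<in> S" using assms(2,3) unfolding complex_subspace_def by blast
  then show ?thesis by simp
qed

lemma complex_subspace_diff:
  assumes "vector_space sc" "complex_subspace sc S" "x \<in> S" "y \<in> S"
  shows "x - y \<in> S"
proof -
  have "x + - y \<in> S"
    using assms(2,3) complex_subspace_uminus[OF assms(1,2,4)] unfolding complex_subspace_def by blast
  then show ?thesis by simp
qed

context
  fixes sc :: "complex \<Rightarrow> 'a::ab_group_add \<Rightarrow> 'a" and ip Kp Km
  assumes fd: "fundamental_decomposition sc ip Kp Km"
begin

lemma fundamental_decomposition_exists: "\<exists>p\<in>Kp. \<exists>m\<in>Km. x = p + m"
  using fd unfolding fundamental_decomposition_def by (elim conjE) (rule spec)

lemma fundamental_decomposition_subspaces: "complex_subspace sc Kp" "complex_subspace sc Km"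
  using fd unfolding fundamental_decomposition_def by simp_all

lemma fundamental_decomposition_orthogonal: "p \<in> Kp \<Longrightarrow> m \<in> Km \<Longrightarrow> ip p m = 0"
  using fd unfolding fundamental_decomposition_def by simp

context
  assumes vs: "vector_space sc"
begin

lemma fundamental_decomposition_unique:
  assumes "p \<in> Kp" "m \<in> Km" "p' \<in> Kp" "m' \<in> Km" "p + m = p' + m'"
  shows "p = p' \<and> m = m'"
proof -
  have eq: "p - p' = m' - m" using assms(5) by (simp add: algebra_simps)
  have "p - p' \<in> Kp" "m' - m \<in> Km"
    using assms(1-4) complex_subspace_diff[OF vs] fundamental_decomposition_subspaces by blast+
  moreover have "Kp \<inter> Km = {0}" using fd unfolding fundamental_decomposition_def by (elim conjE)
  ultimately have "p - p' = 0" unfolding eq by blast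
  then show ?thesis using eq by simp
qed

lemma fund_sym_add:
  assumes "p \<in> Kp" "m \<in> Km"
  shows "fund_sym Kp Km (p + m) = p - m"
  unfolding fund_sym_def
proof (rule the_equality)
  show "\<exists>p'\<in>Kp. \<exists>m'\<in>Km. p + m = p' + m' \<and> p - m = p' - m'" using assms by blast
next
  fix y assume "\<exists>p'\<in>Kp. \<exists>m'\<in>Km. p + m = p' + m' \<and> y = p' - m'"
  then show "y = p - m" using fundamental_decomposition_unique[OF assms] by blast
qed

lemma fund_sym_fund_sym: "fund_sym Kp Km (fund_sym Kp Km x) = x"
proof -
  obtain p m where pm: "p \<in> Kp" "m \<in> Km" "x = p + m"
    using fundamental_decomposition_exists by blast
  have "- m \<in> Km"
    using complex_subspace_uminus[OF vs fundamental_decomposition_subspaces(2) pm(2)] .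
  have "fund_sym Kp Km x = p + - m" using fund_sym_add[OF pm(1,2)] pm(3) by simp
  then show ?thesis using fund_sym_add[OF pm(1) \<open>- m \<in> Km\<close>] pm(3) by simp
qed

end

end

context
  fixes sc :: "complex \<Rightarrow> 'a::ab_group_add \<Rightarrow> 'a" and ip
  assumes herm: "hermitian_form sc ip"
begin

lemma hermitian_form_cnj: "ip x y = cnj (ip y x)"
  using herm unfolding hermitian_form_def by blast

lemma hermitian_form_add_left: "ip (x + y) z = ip x z + ip y z"
  using herm unfolding hermitian_form_def by blast

lemma hermitian_form_add_right: "ip x (y + z) = ip x y + ip x z"
  by (simp only: hermitian_form_cnj[of x] hermitian_form_add_left complex_cnj_add)

context
  assumes vs: "vector_space sc"
begin

lemma hermitian_form_minus_left: "ip (- x) y = - ip x y"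
proof -
  interpret vector_space sc by (rule vs)
  have "ip (sc (-1) x) y = -1 * ip x y" using herm unfolding hermitian_form_def by blast
  then show ?thesis by simp
qed

lemma hermitian_form_minus_right: "ip x (- y) = - ip x y"
  by (simp only: hermitian_form_cnj[of x] hermitian_form_minus_left complex_cnj_minus)

lemma hermitian_form_diff_left: "ip (x - y) z = ip x z - ip y z"
  by (simp only: diff_conv_add_uminus hermitian_form_add_left hermitian_form_minus_left)

lemma hermitian_form_diff_right: "ip x (y - z) = ip x y - ip x z"
  by (simp only: diff_conv_add_uminus hermitian_form_add_right hermitian_form_minus_right)

end

end

context
  fixes sc :: "complex \<Rightarrow> 'a::ab_group_add \<Rightarrow> 'a" and ip Kp Km
  assumes K: "krein_space sc ip Kp Km"
begin

lemma krein_space_vector_space: "vector_space sc"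
  and krein_space_hermitian_form: "hermitian_form sc ip"
  and krein_space_fundamental_decomposition: "fundamental_decomposition sc ip Kp Km"
  using K unfolding krein_space_def by simp_all

lemma krein_space_fund_sym_fund_sym: "fund_sym Kp Km (fund_sym Kp Km x) = x"
  by (rule fund_sym_fund_sym[OF krein_space_fundamental_decomposition krein_space_vector_space])

lemma fund_sym_selfadjoint: "ip (fund_sym Kp Km y) x = ip y (fund_sym Kp Km x)"
proof -
  note vs = krein_space_vector_space and herm = krein_space_hermitian_form
    and fd = krein_space_fundamental_decomposition
  note ip_simps = hermitian_form_add_left[OF herm] hermitian_form_add_right[OF herm]
    hermitian_form_diff_left[OF herm vs] hermitian_form_diff_right[OF herm vs]
  obtain p m where pm: "p \<in> Kp" "m \<in> Km" "y = p + m"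
    using fundamental_decomposition_exists[OF fd] by blast
  obtain p' m' where pm': "p' \<in> Kp" "m' \<in> Km" "x = p' + m'"
    using fundamental_decomposition_exists[OF fd] by blast
  have "ip p m' = 0" "ip p' m = 0"
    using fundamental_decomposition_orthogonal[OF fd] pm pm' by simp_all
  moreover have "ip m p' = 0"
    using hermitian_form_cnj[OF herm, of m p'] \<open>ip p' m = 0\<close> by simp
  ultimately have "ip (p - m) (p' + m') = ip (p + m) (p' - m')"
    by (simp add: ip_simps)
  then show ?thesis using pm pm' fund_sym_add[OF fd vs] by simp
qed

lemma J_norm_fund_sym: "J_norm ip Kp Km (fund_sym Kp Km x) = J_norm ip Kp Km x"
  unfolding J_norm_def J_inner_def
  using fund_sym_selfadjoint[of x x] krein_space_fund_sym_fund_sym by simp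

lemma hilbert_frame_J_inner_iff_krein_frame:
  "hilbert_frame (J_inner ip Kp Km) f A B \<longleftrightarrow>
   krein_frame ip Kp Km (\<lambda>n. fund_sym Kp Km (f n)) A B"
  unfolding hilbert_frame_def krein_frame_def J_norm_def[symmetric]
  unfolding J_inner_def fund_sym_selfadjoint ..

lemma krein_frame_fund_sym_iff:
  "krein_frame ip Kp Km (\<lambda>n. fund_sym Kp Km (f n)) A B \<longleftrightarrow> krein_frame ip Kp Km f A B"
proof -
  let ?J = "fund_sym Kp Km"
  define frame_at where "frame_at x \<longleftrightarrow>
    summable (\<lambda>n. (cmod (ip (f n) x))\<^sup>2) \<and>
    A * (J_norm ip Kp Km x)\<^sup>2 \<le> (\<Sum>n. (cmod (ip (f n) x))\<^sup>2) \<and>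
    (\<Sum>n. (cmod (ip (f n) x))\<^sup>2) \<le> B * (J_norm ip Kp Km x)\<^sup>2" for x
  have "surj ?J"
    using krein_space_fund_sym_fund_sym by (rule surjI)
  then have "(\<forall>x. frame_at (?J x)) \<longleftrightarrow> (\<forall>x. frame_at x)"
    by (metis surjD)
  moreover have "krein_frame ip Kp Km (\<lambda>n. ?J (f n)) A B \<longleftrightarrow>
      0 < A \<and> A \<le> B \<and> (\<forall>x. frame_at (?J x))"
    unfolding krein_frame_def frame_at_def fund_sym_selfadjoint J_norm_fund_sym ..
  ultimately show ?thesis unfolding krein_frame_def frame_at_def by blast
qed

end

theorem theorem3p3:
  fixes sc :: "complex \<Rightarrow> 'a::ab_group_add \<Rightarrow> 'a"
    and ip :: "'a \<Rightarrow> 'a \<Rightarrow> complex"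
    and Kp Km :: "'a set" and k :: "nat \<Rightarrow> 'a" and A B :: real
  assumes "krein_space sc ip Kp Km"
    and "0 < A" and "A \<le> B"
  defines "J \<equiv> fund_sym Kp Km"
  shows "(krein_frame ip Kp Km k A B \<longleftrightarrow> krein_frame ip Kp Km (\<lambda>n. J (k n)) A B) \<and>
         (krein_frame ip Kp Km k A B \<longleftrightarrow> hilbert_frame (J_inner ip Kp Km) k A B) \<and>
         (krein_frame ip Kp Km k A B \<longleftrightarrow> hilbert_frame (J_inner ip Kp Km) (\<lambda>n. J (k n)) A B)"
proof -
  note K = assms(1)
  have JJk: "(\<lambda>n. J (J (k n))) = k"
    unfolding J_def krein_space_fund_sym_fund_sym[OF K] ..
  have i_ii: "krein_frame ip Kp Km (\<lambda>n. J (k n)) A B \<longleftrightarrow> krein_frame ip Kp Km k A B"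
    unfolding J_def by (rule krein_frame_fund_sym_iff[OF K])
  have iii: "hilbert_frame (J_inner ip Kp Km) k A B \<longleftrightarrow>
      krein_frame ip Kp Km (\<lambda>n. J (k n)) A B"
    unfolding J_def by (rule hilbert_frame_J_inner_iff_krein_frame[OF K])
  have iv: "hilbert_frame (J_inner ip Kp Km) (\<lambda>n. J (k n)) A B \<longleftrightarrow> krein_frame ip Kp Km k A B"
    using hilbert_frame_J_inner_iff_krein_frame[OF K, of "\<lambda>n. J (k n)"] JJk
    unfolding J_def by simp
  show ?thesis using i_ii iii iv by blast
qed

end
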